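(* Let $H_0,H_1$ be complex Hilbert spaces, $G$ a densely defined closed operator from $H_0$ into $H_1$ and $D$ a densely defined closed operator from $H_1$ into $H_0$ with $-G^*\subset D$, and let $\mathring G=-D^*$. Let $m\in\mathcal L(H_0)$ and let $a\in\mathcal L(H_1)$ be coercive. Let $\mathring T\in\mathcal L(\mathrm{dom}(\mathring G))$ be defined by $(\mathring Tu,v)_{\mathrm{dom}(\mathring G)}=(aGu,Gv)_{H_1}+(mu,v)_{H_0}$ for all $u,v\in\mathrm{dom}(\mathring G)$. If the inclusion $\tau\colon\mathrm{dom}(\mathring G)\to H_0$ is compact, then $\mathring T$ has closed range.
   Context: $\mathrm{dom}(\mathring G)$ carries the graph inner product $(u,v)_{\mathrm{dom}(\mathring G)}=(u,v)_{H_0}+(\mathring Gu,\mathring Gv)_{H_1}$; note $\mathring G\subset G$. Coercive: $\mathrm{Re}(ax,x)\ge\mu\|x\|^2$ for some $\mu>0$ and all $x$. *)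

theory Defs
  imports "HOL-Analysis.Analysis"
begin

class complex_vector = real_vector +
  fixes scaleC :: "complex \<Rightarrow> 'a \<Rightarrow> 'a"
  assumes scaleC_add_right: "scaleC c (x + y) = scaleC c x + scaleC c y"
    and scaleC_add_left: "scaleC (b + c) x = scaleC b x + scaleC c x"
    and scaleC_scaleC: "scaleC b (scaleC c x) = scaleC (b * c) x"
    and scaleC_one: "scaleC 1 x = x"
    and scaleR_scaleC: "scaleR r x = scaleC (complex_of_real r) x"

class complex_inner = real_normed_vector + complex_vector +
  fixes cinner :: "'a \<Rightarrow> 'a \<Rightarrow> complex"
  assumes cinner_add_left: "cinner (x + y) z = cinner x z + cinner y z"
    and cinner_scaleC_left: "cinner (scaleC c x) y = c * cinner x y"
    and cinner_commute: "cinner x y = cnj (cinner y x)"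
    and cinner_self_nonneg: "0 \<le> Re (cinner x x)"
    and norm_eq_sqrt_cinner: "norm x = sqrt (Re (cinner x x))"

class chilbert_space = complex_inner + complete_space

definition clinear :: "('a::complex_vector \<Rightarrow> 'b::complex_vector) \<Rightarrow> bool" where
  "clinear f \<longleftrightarrow> (\<forall>x y. f (x + y) = f x + f y) \<and> (\<forall>c x. f (scaleC c x) = scaleC c (f x))"

definition bounded_clinear :: "('a::complex_inner \<Rightarrow> 'b::complex_inner) \<Rightarrow> bool" where
  "bounded_clinear f \<longleftrightarrow> clinear f \<and> (\<exists>K. \<forall>x. norm (f x) \<le> norm x * K)"

definition csubspace :: "'a::complex_vector set \<Rightarrow> bool" where
  "csubspace S \<longleftrightarrow> 0 \<in> S \<and> (\<forall>x\<in>S. \<forall>y\<in>S. x + y \<in> S) \<and> (\<forall>c. \<forall>x\<in>S. scaleC c x \<in> S)"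

text \<open>A (possibly unbounded) linear operator, given by its domain and its action on it.\<close>
definition lin_op :: "'a::complex_vector set \<Rightarrow> ('a \<Rightarrow> 'b::complex_vector) \<Rightarrow> bool" where
  "lin_op S A \<longleftrightarrow> csubspace S \<and>
     (\<forall>x\<in>S. \<forall>y\<in>S. A (x + y) = A x + A y) \<and> (\<forall>c. \<forall>x\<in>S. A (scaleC c x) = scaleC c (A x))"

definition densely_defined :: "'a::{complex_vector,topological_space} set \<Rightarrow> ('a \<Rightarrow> 'b::complex_vector) \<Rightarrow> bool" where
  "densely_defined S A \<longleftrightarrow> lin_op S A \<and> closure S = UNIV"

definition closed_op :: "'a::{complex_vector,topological_space} set \<Rightarrow> ('a \<Rightarrow> 'b::{complex_vector,topological_space}) \<Rightarrow> bool" where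
  "closed_op S A \<longleftrightarrow> lin_op S A \<and> closed {(x, A x) | x. x \<in> S}"

definition adj_dom :: "'a::complex_inner set \<Rightarrow> ('a \<Rightarrow> 'b::complex_inner) \<Rightarrow> 'b set" where
  "adj_dom S A = {y. \<exists>z. \<forall>x\<in>S. cinner (A x) y = cinner x z}"

definition adj :: "'a::complex_inner set \<Rightarrow> ('a \<Rightarrow> 'b::complex_inner) \<Rightarrow> 'b \<Rightarrow> 'a" where
  "adj S A y = (THE z. \<forall>x\<in>S. cinner (A x) y = cinner x z)"

end

theory Submission
  imports Defs
begin

text \<open>
Write \<open>G\<^sub>0\<close> for \<open>-D\<^sup>*\<close>. Taking adjoints in \<open>-G\<^sup>* \<subseteq> D\<close> gives \<open>G\<^sub>0 \<subseteq> G\<^sup>*\<^sup>* = G\<close>,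
so \<open>T\<close> is the operator of the form \<open>(a G\<^sub>0 u, G\<^sub>0 v) + (m u, v)\<close> on the graph space of \<open>G\<^sub>0\<close>.
Coercivity of \<open>a\<close> bounds \<open>\<mu> |G\<^sub>0 w|\<^sup>2\<close> by \<open>|T w| |w|\<close> (graph norms) plus \<open>|m| |w|\<^sup>2\<close>
(norm of \<open>H\<^sub>0\<close>). Hence a sequence that is bounded in the graph norm, converges in \<open>H\<^sub>0\<close> and has
Cauchy images converges in the graph norm, and by compactness of the embedding every bounded
sequence with Cauchy images has such a subsequence. Now let \<open>T u\<^sub>n \<rightarrow> y\<close> with preimages \<open>u\<^sub>n\<close>
of almost minimal norm. Were they unbounded, normalising would produce a kernel vector \<open>v\<close> with
\<open>u\<^sub>n - |u\<^sub>n| v\<close> a much shorter preimage; so they are bounded, and a convergent subsequence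
yields a preimage of \<open>y\<close>.
\<close>

lemma cinner_zero_left [simp]: "cinner 0 (y::'a::complex_inner) = 0"
  using cinner_add_left[of 0 0 y] by simp

lemma cinner_add_right: "cinner (x::'a::complex_inner) (y + z) = cinner x y + cinner x z"
  by (metis cinner_add_left cinner_commute complex_cnj_add)

lemma cinner_zero_right [simp]: "cinner (x::'a::complex_inner) 0 = 0"
  using cinner_add_right[of x 0 0] by simp

lemma cinner_scaleC_right: "cinner (x::'a::complex_inner) (scaleC c y) = cnj c * cinner x y"
  by (metis cinner_commute cinner_scaleC_left complex_cnj_mult)

lemma cinner_minus_left: "cinner (- x::'a::complex_inner) y = - cinner x y"
  using cinner_add_left[of x "-x" y] by (simp add: add_eq_0_iff)

lemma cinner_minus_right: "cinner (x::'a::complex_inner) (- y) = - cinner x y"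
  using cinner_add_right[of x y "-y"] by (simp add: add_eq_0_iff)

lemma cinner_diff_left: "cinner (x - y::'a::complex_inner) z = cinner x z - cinner y z"
  using cinner_add_left[of x "-y" z] by (simp add: cinner_minus_left)

lemma cinner_diff_right: "cinner (x::'a::complex_inner) (y - z) = cinner x y - cinner x z"
  using cinner_add_right[of x y "-z"] by (simp add: cinner_minus_right)

lemma cinner_scaleR_left: "cinner (scaleR r x::'a::complex_inner) y = of_real r * cinner x y"
  by (simp add: scaleR_scaleC cinner_scaleC_left)

lemma cinner_self_eq_norm_sq: "cinner (x::'a::complex_inner) x = of_real ((norm x)\<^sup>2)"
proof -
  have "Im (cinner x x) = 0"
    using cinner_commute[of x x] by (metis cnj.simps(2) neg_equal_zero)
  then show ?thesis
    by (simp add: norm_eq_sqrt_cinner cinner_self_nonneg complex_eq_iff)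
qed

lemma Im_cinner_self [simp]: "Im (cinner (x::'a::complex_inner) x) = 0"
  by (simp add: cinner_self_eq_norm_sq)

lemma power2_norm_eq_cinner: "(norm (x::'a::complex_inner))\<^sup>2 = Re (cinner x x)"
  by (simp add: cinner_self_eq_norm_sq)

lemma cinner_eq_zero_iff [simp]: "cinner (x::'a::complex_inner) x = 0 \<longleftrightarrow> x = 0"
  by (simp add: cinner_self_eq_norm_sq)

lemma norm_scaleC: "norm (scaleC c (x::'a::complex_inner)) = cmod c * norm x"
proof -
  have "(norm (scaleC c x))\<^sup>2 = Re (c * cnj c * cinner x x)"
    by (simp add: power2_norm_eq_cinner cinner_scaleC_left cinner_scaleC_right mult.assoc)
  also have "c * cnj c * cinner x x = of_real ((cmod c * norm x)\<^sup>2)"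
    by (simp add: complex_norm_square[symmetric] cinner_self_eq_norm_sq power_mult_distrib)
  finally show ?thesis
    by (metis Re_complex_of_real norm_ge_zero power2_eq_imp_eq zero_le_mult_iff)
qed

lemma scaleC_minus_one [simp]: "scaleC (-1) (x::'a::complex_vector) = - x"
  using scaleR_scaleC[of "-1" x] by simp

lemma scaleC_minus_right: "scaleC c (- x::'a::complex_vector) = - scaleC c x"
  by (metis add_eq_0_iff2 add_left_cancel scaleC_add_right add.right_neutral)

lemma power2_norm_add_scaleC:
  "(norm (x + scaleC t y::'a::complex_inner))\<^sup>2
     = (norm x)\<^sup>2 + 2 * Re (cnj t * cinner x y) + (cmod t)\<^sup>2 * (norm y)\<^sup>2"
proof -
  have "(norm (x + scaleC t y))\<^sup>2 = Re (cinner x x) + Re (cinner x (scaleC t y))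
      + Re (cinner (scaleC t y) x) + Re (cinner (scaleC t y) (scaleC t y))"
    by (simp only: power2_norm_eq_cinner cinner_add_left cinner_add_right plus_complex.sel add.assoc)
  moreover have "Re (cinner (scaleC t y) x) = Re (cnj t * cinner x y)"
    by (metis cnj.sel(1) cinner_commute cinner_scaleC_right)
  moreover have "Re (cinner (scaleC t y) (scaleC t y)) = (cmod t)\<^sup>2 * (norm y)\<^sup>2"
    by (simp only: power2_norm_eq_cinner[symmetric] norm_scaleC power_mult_distrib)
  ultimately show ?thesis
    by (simp only: power2_norm_eq_cinner[of x] cinner_scaleC_right)
qed

lemma parallelogram_law:
  "(norm (x + y::'a::complex_inner))\<^sup>2 + (norm (x - y))\<^sup>2 = 2 * (norm x)\<^sup>2 + 2 * (norm y)\<^sup>2"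
  using power2_norm_add_scaleC[of x 1 y] power2_norm_add_scaleC[of x "-1" y]
  by (simp add: scaleC_one)

lemma Re_cinner_le: "Re (cinner (x::'a::complex_inner) y) \<le> norm x * norm y"
proof -
  have "(norm (x + y))\<^sup>2 \<le> (norm x + norm y)\<^sup>2"
    by (simp add: norm_triangle_ineq power_mono)
  then show ?thesis
    using power2_norm_add_scaleC[of x 1 y] by (simp add: scaleC_one power2_eq_square algebra_simps)
qed

lemma norm_cinner_le: "cmod (cinner (x::'a::complex_inner) y) \<le> norm x * norm y"
proof (cases "cinner x y = 0")
  case False
  define c where "c = cnj (cinner x y) / cmod (cinner x y)"
  have "cnj (cinner x y) * cinner x y = (cmod (cinner x y))\<^sup>2"
    by (metis complex_norm_square mult.commute of_real_power)
  then have "cinner (scaleC c x) y = cmod (cinner x y)"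
    using False by (simp add: c_def cinner_scaleC_left power2_eq_square)
  then have "cmod (cinner x y) = Re (cinner (scaleC c x) y)" by simp
  also have "\<dots> \<le> norm x * norm y"
    using Re_cinner_le[of "scaleC c x" y] False by (simp add: norm_scaleC c_def norm_divide)
  finally show ?thesis .
qed simp

lemma bounded_bilinear_cinner: "bounded_bilinear (cinner :: 'a::complex_inner \<Rightarrow> 'a \<Rightarrow> complex)"
proof
  fix x x' y y' :: 'a and r :: real
  show "cinner (x + x') y = cinner x y + cinner x' y" by (rule cinner_add_left)
  show "cinner x (y + y') = cinner x y + cinner x y'" by (rule cinner_add_right)
  show "cinner (scaleR r x) y = scaleR r (cinner x y)"
    by (simp add: cinner_scaleR_left scaleR_conv_of_real)
  show "cinner x (scaleR r y) = scaleR r (cinner x y)"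
    by (simp add: scaleR_scaleC cinner_scaleC_right scaleR_conv_of_real)
  show "\<exists>K. \<forall>x y::'a. norm (cinner x y) \<le> norm x * norm y * K"
    by (rule exI[of _ 1]) (simp add: norm_cinner_le)
qed

lemmas tendsto_cinner = bounded_bilinear.tendsto[OF bounded_bilinear_cinner]

instantiation prod :: (complex_vector, complex_vector) complex_vector
begin

definition scaleC_prod_def: "scaleC c x = (scaleC c (fst x), scaleC c (snd x))"

instance
  by standard
    (simp_all add: scaleC_prod_def prod_eq_iff scaleC_add_right scaleC_add_left scaleC_scaleC
      scaleC_one scaleR_scaleC)

end

lemma scaleC_Pair [simp]: "scaleC c (x, y) = (scaleC c x, scaleC c y)"
  by (simp add: scaleC_prod_def)

text \<open>With the sum inner product on pairs, \<open>(u, A u)\<close> carries the graph inner product of \<open>dom A\<close>.\<close>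

instantiation prod :: (complex_inner, complex_inner) complex_inner
begin

definition cinner_prod_def: "cinner x y = cinner (fst x) (fst y) + cinner (snd x) (snd y)"

instance
proof
  fix x y z :: "'a \<times> 'b" and c :: complex
  show "cinner (x + y) z = cinner x z + cinner y z"
    by (simp add: cinner_prod_def cinner_add_left)
  show "cinner (scaleC c x) y = c * cinner x y"
    by (simp add: cinner_prod_def scaleC_prod_def cinner_scaleC_left distrib_left)
  show "cinner x y = cnj (cinner y x)"
    by (metis cinner_prod_def cinner_commute complex_cnj_add)
  show "0 \<le> Re (cinner x x)"
    by (simp add: cinner_prod_def cinner_self_nonneg)
  show "norm x = sqrt (Re (cinner x x))"
    by (simp add: cinner_prod_def norm_prod_def power2_norm_eq_cinner)
qed

end

instance prod :: (chilbert_space, chilbert_space) chilbert_space ..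

lemma cinner_Pair [simp]: "cinner (a, b) (c, d) = cinner a c + cinner b d"
  by (simp add: cinner_prod_def)

lemma Cauchy_if_dist_sq_le:
  fixes f :: "nat \<Rightarrow> 'a::metric_space" and g :: "nat \<Rightarrow> 'b::metric_space"
    and h :: "nat \<Rightarrow> 'c::metric_space"
  assumes "Cauchy f" and "Cauchy g" and "C \<ge> 0"
    and le: "\<And>m n. (dist (h m) (h n))\<^sup>2 \<le> C * dist (f m) (f n) + C * (dist (g m) (g n))\<^sup>2"
  shows "Cauchy h"
proof (rule metric_CauchyI)
  fix e :: real assume "e > 0"
  define \<delta> where "\<delta> = min 1 (e\<^sup>2 / (2 * C + 1))"
  have \<delta>: "0 < \<delta>" "\<delta> \<le> 1" "2 * C * \<delta> < e\<^sup>2"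
  proof -
    show "0 < \<delta>" "\<delta> \<le> 1"
      using \<open>e > 0\<close> \<open>C \<ge> 0\<close> by (simp_all add: \<delta>_def)
    have "2 * C * \<delta> \<le> 2 * C * (e\<^sup>2 / (2 * C + 1))"
      using \<open>C \<ge> 0\<close> by (intro mult_left_mono) (simp_all add: \<delta>_def)
    also have "\<dots> < e\<^sup>2"
      using \<open>e > 0\<close> \<open>C \<ge> 0\<close> by (simp add: field_simps)
    finally show "2 * C * \<delta> < e\<^sup>2" .
  qed
  obtain N1 where N1: "\<forall>m\<ge>N1. \<forall>n\<ge>N1. dist (f m) (f n) < \<delta>"
    using metric_CauchyD[OF \<open>Cauchy f\<close> \<delta>(1)] by blast
  obtain N2 where N2: "\<forall>m\<ge>N2. \<forall>n\<ge>N2. dist (g m) (g n) < \<delta>"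
    using metric_CauchyD[OF \<open>Cauchy g\<close> \<delta>(1)] by blast
  have "dist (h m) (h n) < e" if "m \<ge> max N1 N2" "n \<ge> max N1 N2" for m n
  proof -
    have "C * dist (f m) (f n) + C * (dist (g m) (g n))\<^sup>2 \<le> C * \<delta> + C * \<delta>\<^sup>2"
      using N1 N2 that \<open>C \<ge> 0\<close>
      by (intro add_mono mult_left_mono power_mono) (simp_all add: less_imp_le)
    also have "\<dots> \<le> 2 * C * \<delta>"
      using \<delta>(1,2) \<open>C \<ge> 0\<close> mult_left_mono[of "\<delta> * \<delta>" \<delta> C]
      by (simp add: power2_eq_square mult_left_le)
    finally have "(dist (h m) (h n))\<^sup>2 < e\<^sup>2"
      using le[of m n] \<delta>(3) by linarith
    then show ?thesis
      by (rule power_less_imp_less_base) (use \<open>e > 0\<close> in simp)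
  qed
  then show "\<exists>N. \<forall>m\<ge>N. \<forall>n\<ge>N. dist (h m) (h n) < e"
    by blast
qed

lemma Cauchy_if_dist_sq_le_inverse_Suc:
  fixes x :: "nat \<Rightarrow> 'a::metric_space"
  assumes "C \<ge> 0" and "\<And>m n. (dist (x m) (x n))\<^sup>2 \<le> C * (inverse (Suc m) + inverse (Suc n))"
  shows "Cauchy x"
proof (rule metric_CauchyI)
  fix e :: real assume "e > 0"
  then obtain N where N: "inverse (Suc N) < e\<^sup>2 / (2 * C + 1)"
    using reals_Archimedean[of "e\<^sup>2 / (2 * C + 1)"] \<open>C \<ge> 0\<close> by auto
  have "dist (x m) (x n) < e" if "m \<ge> N" "n \<ge> N" for m n
  proof -
    have "inverse (real (Suc m)) \<le> inverse (Suc N)" "inverse (real (Suc n)) \<le> inverse (Suc N)"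
      using that by (auto intro!: le_imp_inverse_le)
    then have "inverse (real (Suc m)) + inverse (Suc n) \<le> 2 * inverse (Suc N)"
      by linarith
    then have "C * (inverse (Suc m) + inverse (Suc n)) \<le> C * (2 * inverse (Suc N))"
      using \<open>C \<ge> 0\<close> by (rule mult_left_mono)
    also have "\<dots> < e\<^sup>2"
      using N \<open>e > 0\<close> \<open>C \<ge> 0\<close> by (simp add: field_simps)
    finally have "(dist (x m) (x n))\<^sup>2 < e\<^sup>2"
      using assms(2)[of m n] by linarith
    then show ?thesis
      by (rule power_less_imp_less_base) (use \<open>e > 0\<close> in simp)
  qed
  then show "\<exists>N. \<forall>m\<ge>N. \<forall>n\<ge>N. dist (x m) (x n) < e"
    by blast
qed

lemma exists_min_norm:
  fixes C :: "'a::chilbert_space set"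
  assumes "C \<noteq> {}" and "closed C"
    and midpoint: "\<And>x y. x \<in> C \<Longrightarrow> y \<in> C \<Longrightarrow> scaleR (1/2) (x + y) \<in> C"
  obtains c where "c \<in> C" and "\<And>x. x \<in> C \<Longrightarrow> norm c \<le> norm x"
proof -
  define d where "d = Inf ((\<lambda>x. (norm x)\<^sup>2) ` C)"
  have bdd: "bdd_below ((\<lambda>x. (norm x)\<^sup>2) ` C)"
    by (rule bdd_belowI[of _ 0]) auto
  have d_le: "d \<le> (norm x)\<^sup>2" if "x \<in> C" for x
    unfolding d_def using bdd that by (simp add: cInf_lower)
  have "\<exists>x\<in>C. (norm x)\<^sup>2 < d + inverse (Suc n)" for n
    using cInf_less_iff[OF _ bdd, of "d + inverse (Suc n)"] \<open>C \<noteq> {}\<close> by (simp add: d_def)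
  then obtain x where x_mem: "\<And>n. x n \<in> C" and x_norm: "\<And>n. (norm (x n))\<^sup>2 < d + inverse (Suc n)"
    by metis
  have dist_sq: "(dist (x m) (x n))\<^sup>2 \<le> 2 * (inverse (Suc m) + inverse (Suc n))" for m n
  proof -
    have "4 * d \<le> 4 * (norm (scaleR (1/2) (x m + x n)))\<^sup>2"
      using d_le[OF midpoint[OF x_mem[of m] x_mem[of n]]] by linarith
    also have "\<dots> = (norm (x m + x n))\<^sup>2"
      by (simp add: power2_eq_square)
    finally have "4 * d \<le> (norm (x m + x n))\<^sup>2" .
    moreover have "(dist (x m) (x n))\<^sup>2 = (norm (x m - x n))\<^sup>2"
      by (simp add: dist_norm)
    ultimately show ?thesis
      using parallelogram_law[of "x m" "x n"] x_norm[of m] x_norm[of n]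
      by (simp only: distrib_left)
  qed
  have "Cauchy x"
    by (rule Cauchy_if_dist_sq_le_inverse_Suc[of 2, OF _ dist_sq]) simp
  then obtain c where c: "x \<longlonglongrightarrow> c"
    using Cauchy_convergent_iff convergent_def by blast
  have "c \<in> C"
    using closed_sequentially[OF \<open>closed C\<close>] x_mem c by blast
  moreover have "norm c \<le> norm y" if "y \<in> C" for y
  proof -
    have lim: "(\<lambda>n. (norm (x n))\<^sup>2) \<longlonglongrightarrow> (norm c)\<^sup>2"
      using c by (intro tendsto_power tendsto_norm)
    have lim': "(\<lambda>n. (norm y)\<^sup>2 + inverse (Suc n)) \<longlonglongrightarrow> (norm y)\<^sup>2"
      using tendsto_add[OF tendsto_const LIMSEQ_inverse_real_of_nat] by simp
    have "(norm (x n))\<^sup>2 \<le> (norm y)\<^sup>2 + inverse (Suc n)" for n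
      using x_norm[of n] d_le[OF that] by linarith
    then have "(norm c)\<^sup>2 \<le> (norm y)\<^sup>2"
      using LIMSEQ_le[OF lim lim'] by blast
    then show ?thesis
      by (rule power2_le_imp_le) simp
  qed
  ultimately show ?thesis
    using that by blast
qed

lemma cinner_eq_zero_if_norm_minimal:
  fixes c b :: "'a::complex_inner"
  assumes "\<And>t. norm c \<le> norm (c + scaleC t b)"
  shows "cinner c b = 0"
proof (cases "b = 0")
  case False
  define S where "S = cinner c b"
  define K where "K = (norm b)\<^sup>2"
  have "K > 0"
    using False by (simp add: K_def)
  define t where "t = - S / K"
  have "(norm c)\<^sup>2 \<le> (norm (c + scaleC t b))\<^sup>2"
    using assms[of t] by (simp add: power_mono)
  also have "\<dots> = (norm c)\<^sup>2 + 2 * Re (cnj t * S) + (cmod t)\<^sup>2 * K"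
    by (simp only: power2_norm_add_scaleC S_def K_def)
  also have "\<dots> = (norm c)\<^sup>2 - (cmod S)\<^sup>2 / K"
  proof -
    have "S * cnj S = of_real ((cmod S)\<^sup>2)"
      by (rule complex_norm_square[symmetric])
    then have "Re (cnj t * S) = - (cmod S)\<^sup>2 / K"
      by (simp add: t_def mult.commute)
    moreover have "(cmod t)\<^sup>2 = (cmod S)\<^sup>2 / K\<^sup>2"
      by (simp add: t_def norm_divide power_divide)
    ultimately show ?thesis
      using \<open>K > 0\<close> by (simp add: power2_eq_square)
  qed
  finally have "(cmod S)\<^sup>2 / K \<le> 0" by simp
  then show ?thesis
    using \<open>K > 0\<close> by (simp add: S_def divide_le_0_iff)
qed simp

lemma eq_if_cinner_eq_on_dense:
  fixes z z' :: "'a::complex_inner"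
  assumes "closure S = UNIV" and "\<And>x. x \<in> S \<Longrightarrow> cinner x z = cinner x z'"
  shows "z = z'"
proof -
  have "closed {x. cinner x (z - z') = 0}"
    by (intro closed_Collect_eq continuous_on_const)
      (auto simp: continuous_on_def intro!: tendsto_cinner tendsto_ident_at tendsto_const)
  moreover have "S \<subseteq> {x. cinner x (z - z') = 0}"
    using assms(2) by (auto simp: cinner_diff_right)
  ultimately have "cinner (z - z') (z - z') = 0"
    using closure_minimal assms(1) by blast
  then show ?thesis by simp
qed

lemma adj_cinner:
  assumes "closure S = UNIV" and "y \<in> adj_dom S A" and "x \<in> S"
  shows "cinner (A x) y = cinner x (adj S A y)"
proof -
  obtain z where z: "\<forall>x\<in>S. cinner (A x) y = cinner x z"
    using assms(2) by (auto simp: adj_dom_def)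
  moreover have "z' = z" if "\<forall>x\<in>S. cinner (A x) y = cinner x z'" for z'
    using that z by (intro eq_if_cinner_eq_on_dense[OF assms(1)]) auto
  ultimately have "adj S A y = z"
    unfolding adj_def by (rule the_equality)
  then show ?thesis
    using z assms(3) by simp
qed

lemma adj_eqI:
  assumes "closure S = UNIV" and "\<And>x. x \<in> S \<Longrightarrow> cinner (A x) y = cinner x z"
  shows "y \<in> adj_dom S A" and "adj S A y = z"
proof -
  show y: "y \<in> adj_dom S A"
    using assms(2) by (auto simp: adj_dom_def)
  show "adj S A y = z"
    using adj_cinner[OF assms(1) y] assms(2) by (intro eq_if_cinner_eq_on_dense[OF assms(1)]) auto
qed

lemma lin_op_adj:
  assumes "closure S = UNIV"
  shows "lin_op (adj_dom S A) (adj S A)"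
proof -
  have add: "y + y' \<in> adj_dom S A \<and> adj S A (y + y') = adj S A y + adj S A y'"
    if "y \<in> adj_dom S A" "y' \<in> adj_dom S A" for y y'
    using adj_eqI[OF assms, of A "y + y'" "adj S A y + adj S A y'"] adj_cinner[OF assms that(1)] adj_cinner[OF assms that(2)]
    by (simp add: cinner_add_right)
  have scale: "scaleC c y \<in> adj_dom S A \<and> adj S A (scaleC c y) = scaleC c (adj S A y)"
    if "y \<in> adj_dom S A" for c y
    using adj_eqI[OF assms, of A "scaleC c y" "scaleC c (adj S A y)"] adj_cinner[OF assms that]
    by (simp add: cinner_scaleC_right)
  have "0 \<in> adj_dom S A"
    using adj_eqI(1)[OF assms, of A 0 0] by simp
  with add scale show ?thesis
    by (simp add: lin_op_def csubspace_def)
qed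

lemma adj_graph_limit:
  assumes "closure S = UNIV" and "\<And>n. y n \<in> adj_dom S A"
    and "y \<longlonglongrightarrow> y0" and "(\<lambda>n. adj S A (y n)) \<longlonglongrightarrow> z"
  shows "y0 \<in> adj_dom S A \<and> adj S A y0 = z"
proof -
  have "cinner (A x) y0 = cinner x z" if "x \<in> S" for x
  proof -
    have "(\<lambda>n. cinner (A x) (y n)) \<longlonglongrightarrow> cinner (A x) y0"
      by (intro tendsto_cinner tendsto_const assms(3))
    moreover have "(\<lambda>n. cinner (A x) (y n)) \<longlonglongrightarrow> cinner x z"
      using adj_cinner[OF assms(1,2) that] by (simp add: tendsto_cinner assms(4))
    ultimately show ?thesis
      using LIMSEQ_unique by blast
  qed
  then show ?thesis
    using adj_eqI[OF assms(1)] by blast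
qed

lemma lin_op_add:
  assumes "lin_op S A" "x \<in> S" "y \<in> S"
  shows "x + y \<in> S \<and> A (x + y) = A x + A y"
  using assms by (simp add: lin_op_def csubspace_def)

lemma lin_op_scaleC:
  assumes "lin_op S A" "x \<in> S"
  shows "scaleC c x \<in> S \<and> A (scaleC c x) = scaleC c (A x)"
  using assms by (simp add: lin_op_def csubspace_def)

lemma lin_op_scaleR:
  assumes "lin_op S A" "x \<in> S"
  shows "scaleR r x \<in> S \<and> A (scaleR r x) = scaleR r (A x)"
  using lin_op_scaleC[OF assms, of "of_real r"] by (simp add: scaleR_scaleC)

lemma lin_op_diff:
  assumes "lin_op S A" "x \<in> S" "y \<in> S"
  shows "x - y \<in> S \<and> A (x - y) = A x - A y"
  using lin_op_add[OF assms(1,2) lin_op_scaleR[OF assms(1,3), of "-1", THEN conjunct1]]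
    lin_op_scaleR[OF assms(1,3), of "-1"] by simp

lemma lin_op_zero: "lin_op S A \<Longrightarrow> 0 \<in> S"
  by (simp add: lin_op_def csubspace_def)

lemma closed_op_projection:
  fixes A :: "'a::chilbert_space \<Rightarrow> 'b::chilbert_space"
  assumes "closed_op S A"
  obtains x0 where "x0 \<in> S" and "\<And>w. w \<in> S \<Longrightarrow> cinner ((x0, A x0) - (u, z)) (w, A w) = 0"
proof -
  have lin: "lin_op S A"
    using assms by (simp add: closed_op_def)
  define \<Gamma> where "\<Gamma> = {(x, A x) | x. x \<in> S}"
  have \<Gamma>_lin: "g + scaleC t h \<in> \<Gamma>" if gh: "g \<in> \<Gamma>" "h \<in> \<Gamma>" for g h t
  proof -
    obtain x y where "x \<in> S" "y \<in> S" "g = (x, A x)" "h = (y, A y)"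
      using gh by (auto simp: \<Gamma>_def)
    then show ?thesis
      using lin_op_add[OF lin] lin_op_scaleC[OF lin] by (fastforce simp: \<Gamma>_def)
  qed
  \<comment> \<open>The shortest element of the shifted graph is orthogonal to the graph.\<close>
  define C where "C = (\<lambda>g. g - (u, z)) ` \<Gamma>"
  have C_closed: "closed C"
  proof -
    have "C = (+) (- (u, z)) ` \<Gamma>"
      unfolding C_def by (intro image_cong) auto
    moreover have "closed \<Gamma>"
      using assms by (simp add: closed_op_def \<Gamma>_def)
    ultimately show ?thesis
      by (simp add: closed_translation)
  qed
  have C_nonempty: "C \<noteq> {}"
    using lin_op_zero[OF lin] by (auto simp: C_def \<Gamma>_def)
  have C_midpoint: "scaleR (1/2) (p + q) \<in> C" if "p \<in> C" "q \<in> C" for p q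
  proof -
    obtain g h where gh: "g \<in> \<Gamma>" "h \<in> \<Gamma>" "p = g - (u, z)" "q = h - (u, z)"
      using \<open>p \<in> C\<close> \<open>q \<in> C\<close> by (auto simp: C_def)
    have "scaleR (1/2) (p + q) = (g + scaleR (1/2) (h - g)) - (u, z)"
      unfolding gh by (simp add: algebra_simps scaleR_2[symmetric] flip: scaleR_add_left)
    moreover have "h - g \<in> \<Gamma>"
      using \<Gamma>_lin[OF gh(2,1), of "-1"] by simp
    then have "g + scaleR (1/2) (h - g) \<in> \<Gamma>"
      using \<Gamma>_lin[OF gh(1)] by (simp add: scaleR_scaleC)
    ultimately show ?thesis
      by (auto simp: C_def)
  qed
  obtain c where "c \<in> C" and c_min: "\<And>p. p \<in> C \<Longrightarrow> norm c \<le> norm p"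
    using exists_min_norm[OF C_nonempty C_closed C_midpoint] by blast
  then obtain x0 where x0: "x0 \<in> S" "c = (x0, A x0) - (u, z)"
    by (auto simp: C_def \<Gamma>_def)
  have "cinner c (w, A w) = 0" if w: "w \<in> S" for w
  proof (rule cinner_eq_zero_if_norm_minimal)
    fix t
    have "(x0, A x0) + scaleC t (w, A w) \<in> \<Gamma>"
      by (rule \<Gamma>_lin) (use x0(1) w in \<open>auto simp: \<Gamma>_def\<close>)
    moreover have "c + scaleC t (w, A w) = ((x0, A x0) + scaleC t (w, A w)) - (u, z)"
      by (simp add: x0(2) algebra_simps)
    ultimately have "c + scaleC t (w, A w) \<in> C"
      unfolding C_def by (rule rev_image_eqI)
    then show "norm c \<le> norm (c + scaleC t (w, A w))"
      by (rule c_min)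
  qed
  then show ?thesis
    using that x0 by blast
qed

lemma closed_op_adj_adj:
  fixes A :: "'a::chilbert_space \<Rightarrow> 'b::chilbert_space"
  assumes "densely_defined S A" and "closed_op S A"
    and adj_adj: "\<And>v. v \<in> adj_dom S A \<Longrightarrow> cinner (adj S A v) u = cinner v z"
  shows "u \<in> S \<and> A u = z"
proof -
  have dS: "closure S = UNIV"
    using assms(1) by (simp add: densely_defined_def)
  obtain x0 where x0: "x0 \<in> S"
    and orth: "\<And>w. w \<in> S \<Longrightarrow> cinner ((x0, A x0) - (u, z)) (w, A w) = 0"
    using closed_op_projection[OF assms(2)] by blast
  define p where "p = A x0 - z"
  have "cinner (A w) p = cinner w (u - x0)" if w: "w \<in> S" for w
  proof -
    have "cinner p (A w) = - cinner (x0 - u) w"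
      using orth[OF w] by (simp add: p_def eq_neg_iff_add_eq_0 add.commute)
    then show ?thesis
      by (metis cinner_commute cinner_minus_right complex_cnj_minus minus_diff_eq)
  qed
  then have p_adj: "p \<in> adj_dom S A" "adj S A p = u - x0"
    using adj_eqI[OF dS] by blast+
  have "cinner (u - x0) u = cinner p z"
    using adj_adj[OF p_adj(1)] p_adj(2) by simp
  moreover have "cinner (u - x0) x0 = cinner p (A x0)"
    using adj_cinner[OF dS p_adj(1) x0] p_adj(2) by (metis cinner_commute)
  ultimately have "cinner (u - x0) (u - x0) = - cinner p p"
    by (simp add: cinner_diff_right p_def)
  then have "(norm (u - x0))\<^sup>2 + (norm p)\<^sup>2 = 0"
    by (simp add: power2_norm_eq_cinner)
  then have "u = x0" "p = 0"
    by (simp_all add: add_nonneg_eq_0_iff)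
  then show ?thesis
    using x0 by (simp add: p_def)
qed

lemma neg_adj_subset_swap:
  fixes A :: "'a::chilbert_space \<Rightarrow> 'b::chilbert_space"
  assumes "densely_defined S A" "closed_op S A" "densely_defined R B"
    and "adj_dom S A \<subseteq> R" and "\<And>y. y \<in> adj_dom S A \<Longrightarrow> B y = - adj S A y"
    and "u \<in> adj_dom R B"
  shows "u \<in> S \<and> A u = - adj R B u"
proof (rule closed_op_adj_adj[OF assms(1,2)])
  fix v assume v: "v \<in> adj_dom S A"
  have "cinner (B v) u = cinner v (adj R B u)"
    using adj_cinner[of R u B v] assms(3,4,6) v by (auto simp: densely_defined_def)
  then show "cinner (adj S A v) u = cinner v (- adj R B u)"
    using assms(5)[OF v] by (metis cinner_minus_left cinner_minus_right minus_minus)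
qed

lemma closed_op_neg_adj:
  assumes "closure S = UNIV" and "\<And>y. y \<in> adj_dom S A \<Longrightarrow> B y = - adj S A y"
  shows "closed_op (adj_dom S A) B"
proof -
  have "lin_op (adj_dom S A) (adj S A)"
    by (rule lin_op_adj[OF assms(1)])
  then have lin: "lin_op (adj_dom S A) B"
    unfolding lin_op_def csubspace_def by (simp add: assms(2) scaleC_minus_right)
  have "closed {(y, B y) | y. y \<in> adj_dom S A}"
  proof (rule closed_sequential_limits[THEN iffD2], intro allI impI, elim conjE)
    fix g and l :: "'b \<times> 'a"
    assume g: "\<forall>n. g n \<in> {(y, B y) | y. y \<in> adj_dom S A}" and lim: "g \<longlonglongrightarrow> l"
    define y where "y n = fst (g n)" for n
    have "y n \<in> adj_dom S A \<and> g n = (y n, - adj S A (y n))" for n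
    proof -
      obtain w where "g n = (w, B w)" "w \<in> adj_dom S A"
        using g by blast
      then show ?thesis
        using assms(2) by (simp add: y_def)
    qed
    then have y: "\<And>n. y n \<in> adj_dom S A" "\<And>n. g n = (y n, - adj S A (y n))"
      by simp_all
    have "y \<longlonglongrightarrow> fst l" "(\<lambda>n. adj S A (y n)) \<longlonglongrightarrow> - snd l"
      using tendsto_fst[OF lim] tendsto_minus[OF tendsto_snd[OF lim]] by (simp_all add: y)
    then have "fst l \<in> adj_dom S A \<and> adj S A (fst l) = - snd l"
      using adj_graph_limit[of S y A] assms(1) y(1) by blast
    then show "l \<in> {(y, B y) | y. y \<in> adj_dom S A}"
      using assms(2) by (auto intro!: exI[of _ "fst l"] simp: prod_eq_iff)
  qed
  with lin show ?thesis
    by (simp add: closed_op_def)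
qed

lemma bounded_clinear_add: "bounded_clinear f \<Longrightarrow> f (x + y) = f x + f y"
  by (simp add: bounded_clinear_def clinear_def)

lemma bounded_clinear_scaleR: "bounded_clinear f \<Longrightarrow> f (scaleR r x) = scaleR r (f x)"
  by (simp add: bounded_clinear_def clinear_def scaleR_scaleC)

lemma bounded_clinear_bound:
  assumes "bounded_clinear f"
  obtains K where "K \<ge> 0" and "\<And>x. norm (f x) \<le> K * norm x"
proof -
  obtain K where K: "\<And>x. norm (f x) \<le> norm x * K"
    using assms by (auto simp: bounded_clinear_def)
  have "norm (f x) \<le> max K 0 * norm x" for x
    using K[of x] mult_left_mono[of K "max K 0" "norm x"] by (simp add: mult.commute)
  then show ?thesis
    using that[of "max K 0"] by simp
qed

lemma exists_near_minimizer:
  fixes f :: "'a \<Rightarrow> real"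
  assumes "P \<noteq> {}" and "\<And>x. 0 \<le> f x"
  shows "\<exists>v\<in>P. \<forall>w\<in>P. f v \<le> f w + 1"
proof -
  have bdd: "bdd_below (f ` P)"
    by (rule bdd_belowI[of _ 0]) (use assms(2) in auto)
  obtain v where "v \<in> P" "f v < Inf (f ` P) + 1"
    using cInf_less_iff[OF _ bdd, of "Inf (f ` P) + 1"] assms(1) by auto
  moreover have "Inf (f ` P) \<le> f w" if "w \<in> P" for w
    using cInf_lower[OF _ bdd] that by simp
  ultimately show ?thesis
    by force
qed

locale form_operator =
  fixes V :: "'h0::chilbert_space set" and A :: "'h0 \<Rightarrow> 'h1::chilbert_space"
    and a :: "'h1 \<Rightarrow> 'h1" and m :: "'h0 \<Rightarrow> 'h0" and T :: "'h0 \<Rightarrow> 'h0"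
  assumes A_closed: "closed_op V A"
    and a_bounded: "bounded_clinear a" and m_bounded: "bounded_clinear m"
    and a_coercive: "\<exists>\<mu>>0. \<forall>x. Re (cinner (a x) x) \<ge> \<mu> * (norm x)\<^sup>2"
    and T_maps: "T ` V \<subseteq> V"
    and T_bounded: "\<exists>K. \<forall>u\<in>V. (norm (T u))\<^sup>2 + (norm (A (T u)))\<^sup>2 \<le> K * ((norm u)\<^sup>2 + (norm (A u))\<^sup>2)"
    and T_form: "\<And>u v. u \<in> V \<Longrightarrow> v \<in> V \<Longrightarrow>
       cinner (T u) v + cinner (A (T u)) (A v) = cinner (a (A u)) (A v) + cinner (m u) v"
begin

definition gr :: "'h0 \<Rightarrow> 'h0 \<times> 'h1" where "gr u = (u, A u)"

lemma lin_op_A: "lin_op V A"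
  using A_closed by (simp add: closed_op_def)

lemma
  assumes "u \<in> V" and "w \<in> V"
  shows add_mem: "u + w \<in> V" and diff_mem: "u - w \<in> V"
    and A_add: "A (u + w) = A u + A w" and A_diff: "A (u - w) = A u - A w"
    and gr_add: "gr (u + w) = gr u + gr w" and gr_diff: "gr (u - w) = gr u - gr w"
  using lin_op_add[OF lin_op_A assms] lin_op_diff[OF lin_op_A assms] by (simp_all add: gr_def)

lemma
  assumes "u \<in> V"
  shows scaleR_mem: "scaleR r u \<in> V" and A_scaleR: "A (scaleR r u) = scaleR r (A u)"
    and gr_scaleR: "gr (scaleR r u) = scaleR r (gr u)"
  using lin_op_scaleR[OF lin_op_A assms] by (simp_all add: gr_def)

lemma gr_eq_iff [simp]: "gr u = gr v \<longleftrightarrow> u = v"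
  by (auto simp: gr_def)

lemma power2_norm_gr: "(norm (gr u))\<^sup>2 = (norm u)\<^sup>2 + (norm (A u))\<^sup>2"
  by (simp add: gr_def norm_Pair)

lemma graph_limit:
  assumes "\<And>n. X n \<in> V" and "X \<longlonglongrightarrow> x" and "(\<lambda>n. A (X n)) \<longlonglongrightarrow> z"
  shows "x \<in> V \<and> A x = z"
proof -
  have "closed {(x, A x) | x. x \<in> V}"
    using A_closed by (simp add: closed_op_def)
  moreover have "(X n, A (X n)) \<in> {(x, A x) | x. x \<in> V}" for n
    using assms(1) by blast
  moreover have "(\<lambda>n. (X n, A (X n))) \<longlonglongrightarrow> (x, z)"
    by (rule tendsto_Pair[OF assms(2,3)])
  ultimately have "(x, z) \<in> {(x, A x) | x. x \<in> V}"
    by (rule closed_sequentially)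
  then show ?thesis
    by blast
qed

lemma T_mem: "u \<in> V \<Longrightarrow> T u \<in> V"
  using T_maps by auto

lemma cinner_gr_T:
  "u \<in> V \<Longrightarrow> v \<in> V \<Longrightarrow> cinner (gr (T u)) (gr v) = cinner (a (A u)) (A v) + cinner (m u) v"
  using T_form by (simp add: gr_def)

lemma eq_if_cinner_gr_eq:
  assumes "x \<in> V" and "y \<in> V" and "\<And>v. v \<in> V \<Longrightarrow> cinner (gr x) (gr v) = cinner (gr y) (gr v)"
  shows "x = y"
proof -
  have "cinner (gr (x - y)) (gr (x - y)) = 0"
    using assms(3)[OF diff_mem[OF assms(1,2)]] by (simp add: gr_diff[OF assms(1,2)] cinner_diff_left)
  then have "gr (x - y) = 0"
    by simp
  then show ?thesis
    by (simp add: gr_def zero_prod_def)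
qed

lemma T_add:
  assumes "u \<in> V" and "w \<in> V"
  shows "T (u + w) = T u + T w"
proof (rule eq_if_cinner_gr_eq)
  show "T (u + w) \<in> V" "T u + T w \<in> V"
    using assms by (simp_all add: add_mem T_mem)
  fix v assume "v \<in> V"
  then show "cinner (gr (T (u + w))) (gr v) = cinner (gr (T u + T w)) (gr v)"
    using assms by (simp add: cinner_gr_T gr_add add_mem T_mem A_add cinner_add_left
        bounded_clinear_add[OF a_bounded] bounded_clinear_add[OF m_bounded])
qed

lemma T_scaleR:
  assumes "u \<in> V"
  shows "T (scaleR r u) = scaleR r (T u)"
proof (rule eq_if_cinner_gr_eq)
  show "T (scaleR r u) \<in> V" "scaleR r (T u) \<in> V"
    using assms by (simp_all add: scaleR_mem T_mem)
  fix v assume "v \<in> V"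
  then show "cinner (gr (T (scaleR r u))) (gr v) = cinner (gr (scaleR r (T u))) (gr v)"
    using assms by (simp add: cinner_gr_T gr_scaleR scaleR_mem T_mem A_scaleR cinner_scaleR_left
        bounded_clinear_scaleR[OF a_bounded] bounded_clinear_scaleR[OF m_bounded] distrib_left)
qed

lemma T_diff:
  assumes "u \<in> V" and "w \<in> V"
  shows "T (u - w) = T u - T w"
  using T_add[OF diff_mem[OF assms] assms(2)] by simp

lemma T_bound:
  obtains C where "C \<ge> 0" and "\<And>u. u \<in> V \<Longrightarrow> norm (gr (T u)) \<le> C * norm (gr u)"
proof -
  obtain K where "\<forall>u\<in>V. (norm (T u))\<^sup>2 + (norm (A (T u)))\<^sup>2 \<le> K * ((norm u)\<^sup>2 + (norm (A u))\<^sup>2)"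
    using T_bounded by blast
  then have K: "\<And>u. u \<in> V \<Longrightarrow> (norm (gr (T u)))\<^sup>2 \<le> K * (norm (gr u))\<^sup>2"
    by (simp add: power2_norm_gr)
  have "norm (gr (T u)) \<le> sqrt (max K 0) * norm (gr u)" if "u \<in> V" for u
  proof -
    have "(norm (gr (T u)))\<^sup>2 \<le> max K 0 * (norm (gr u))\<^sup>2"
      using K[OF that] mult_right_mono[of K "max K 0" "(norm (gr u))\<^sup>2"] by simp
    then have "sqrt ((norm (gr (T u)))\<^sup>2) \<le> sqrt (max K 0 * (norm (gr u))\<^sup>2)"
      by (rule real_sqrt_le_mono)
    then show ?thesis
      by (simp add: real_sqrt_mult)
  qed
  then show ?thesis
    by (intro that[of "sqrt (max K 0)"]) simp_all
qed

lemma T_continuous: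
  assumes X: "\<And>n. X n \<in> V" and x: "x \<in> V" and lim: "(\<lambda>n. gr (X n)) \<longlonglongrightarrow> gr x"
  shows "(\<lambda>n. gr (T (X n))) \<longlonglongrightarrow> gr (T x)"
proof -
  obtain C where C: "\<And>u. u \<in> V \<Longrightarrow> norm (gr (T u)) \<le> C * norm (gr u)"
    using T_bound by blast
  have bound: "norm (gr (T (X n)) - gr (T x)) \<le> C * norm (gr (X n) - gr x)" for n
  proof -
    have "gr (T (X n)) - gr (T x) = gr (T (X n - x))"
      using X x by (simp add: T_diff gr_diff T_mem)
    moreover have "gr (X n) - gr x = gr (X n - x)"
      using X x by (simp add: gr_diff)
    ultimately show ?thesis
      using C[OF diff_mem[OF X x]] by simp
  qed
  have "(\<lambda>n. C * norm (gr (X n) - gr x)) \<longlonglongrightarrow> 0"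
    using tendsto_mult_right_zero[OF tendsto_norm_zero[OF LIM_zero[OF lim]]] by simp
  then have "(\<lambda>n. gr (T (X n)) - gr (T x)) \<longlonglongrightarrow> 0"
    by (rule Lim_null_comparison[OF always_eventually[OF allI[OF bound]]])
  then show ?thesis
    by (rule LIM_zero_cancel)
qed

lemma coercive_estimate:
  obtains \<mu> M where "\<mu> > 0" and "M \<ge> 0"
    and "\<And>w. w \<in> V \<Longrightarrow> \<mu> * (norm (A w))\<^sup>2 \<le> norm (gr (T w)) * norm (gr w) + M * (norm w)\<^sup>2"
proof -
  obtain \<mu> where \<mu>: "\<mu> > 0" "\<And>x. \<mu> * (norm x)\<^sup>2 \<le> Re (cinner (a x) x)"
    using a_coercive by auto
  obtain M where M: "M \<ge> 0" "\<And>x. norm (m x) \<le> M * norm x"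
    using bounded_clinear_bound[OF m_bounded] by blast
  have est: "\<mu> * (norm (A w))\<^sup>2 \<le> norm (gr (T w)) * norm (gr w) + M * (norm w)\<^sup>2" if w: "w \<in> V" for w
  proof -
    have "Re (cinner (gr (T w)) (gr w)) = Re (cinner (a (A w)) (A w)) + Re (cinner (m w) w)"
      by (simp add: cinner_gr_T w)
    moreover have "Re (cinner (gr (T w)) (gr w)) \<le> norm (gr (T w)) * norm (gr w)"
      by (rule Re_cinner_le)
    moreover have "- Re (cinner (m w) w) \<le> M * (norm w)\<^sup>2"
    proof -
      have "- Re (cinner (m w) w) \<le> norm (m w) * norm w"
        using abs_Re_le_cmod[of "cinner (m w) w"] norm_cinner_le[of "m w" w] by linarith
      also have "\<dots> \<le> M * norm w * norm w"
        using M(2) by (simp add: mult_right_mono)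
      finally show ?thesis
        by (simp add: power2_eq_square mult.assoc)
    qed
    ultimately show ?thesis
      using \<mu>(2)[of "A w"] by linarith
  qed
  show ?thesis
    by (rule that[OF \<mu>(1) M(1) est])
qed

lemma graph_convergent:
  assumes X: "\<And>n. X n \<in> V" and bounded: "\<And>n. norm (gr (X n)) \<le> B"
    and lim: "X \<longlonglongrightarrow> x" and TX: "Cauchy (\<lambda>n. gr (T (X n)))"
  shows "x \<in> V \<and> (\<lambda>n. gr (X n)) \<longlonglongrightarrow> gr x"
proof -
  obtain \<mu> M where \<mu>: "\<mu> > 0" and M: "M \<ge> 0"
    and est: "\<And>w. w \<in> V \<Longrightarrow> \<mu> * (norm (A w))\<^sup>2 \<le> norm (gr (T w)) * norm (gr w) + M * (norm w)\<^sup>2"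
    using coercive_estimate by blast
  have B: "B \<ge> 0"
    using bounded[of 0] norm_ge_zero order_trans by blast
  define C where "C = max (2 * B) M / \<mu>"
  have "C \<ge> 0"
    using \<mu> M by (simp add: C_def)
  moreover have "(dist (A (X m)) (A (X n)))\<^sup>2
      \<le> C * dist (gr (T (X m))) (gr (T (X n))) + C * (dist (X m) (X n))\<^sup>2" for m n
  proof -
    define w where "w = X m - X n"
    have w: "w \<in> V" "norm w = dist (X m) (X n)" "norm (A w) = dist (A (X m)) (A (X n))"
      "norm (gr (T w)) = dist (gr (T (X m))) (gr (T (X n)))"
      using X by (simp_all add: w_def diff_mem A_diff gr_diff T_diff T_mem dist_norm)
    have "norm (gr w) \<le> 2 * B"
      using norm_triangle_ineq4[of "gr (X m)" "gr (X n)"] bounded[of m] bounded[of n] X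
      by (simp add: w_def gr_diff)
    then have "\<mu> * (norm (A w))\<^sup>2 \<le> 2 * B * norm (gr (T w)) + M * (norm w)\<^sup>2"
      using est[OF w(1)] mult_left_mono[of "norm (gr w)" "2 * B" "norm (gr (T w))"]
      by (simp add: mult.commute)
    also have "\<dots> \<le> max (2 * B) M * norm (gr (T w)) + max (2 * B) M * (norm w)\<^sup>2"
      by (intro add_mono mult_right_mono) simp_all
    finally show ?thesis
      using \<mu> by (simp add: C_def w field_simps)
  qed
  ultimately have "Cauchy (\<lambda>n. A (X n))"
    by (intro Cauchy_if_dist_sq_le[OF TX LIMSEQ_imp_Cauchy[OF lim]])
  then obtain z where z: "(\<lambda>n. A (X n)) \<longlonglongrightarrow> z"
    using Cauchy_convergent_iff convergent_def by blast
  have "x \<in> V \<and> A x = z"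
    by (rule graph_limit[OF X lim z])
  then show ?thesis
    using tendsto_Pair[OF lim z] by (simp add: gr_def)
qed

end

locale compact_form_operator = form_operator +
  assumes compact_unit_ball: "compact (closure {u \<in> V. (norm u)\<^sup>2 + (norm (A u))\<^sup>2 \<le> 1})"
begin

lemma convergent_subseq:
  assumes X: "\<And>n. X n \<in> V" and bounded: "\<And>n. norm (gr (X n)) \<le> B"
    and TX: "Cauchy (\<lambda>n. gr (T (X n)))"
  obtains l x where "strict_mono l" and "x \<in> V" and "(\<lambda>k. gr (X (l k))) \<longlonglongrightarrow> gr x"
proof -
  define c where "c = max B 1"
  have c: "c > 0" "\<And>n. norm (gr (X n)) \<le> c"
    using bounded by (auto simp: c_def intro: le_max_iff_disj[THEN iffD2])
  define Y where "Y n = scaleR (inverse c) (X n)" for n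
  have "Y n \<in> closure {u \<in> V. (norm u)\<^sup>2 + (norm (A u))\<^sup>2 \<le> 1}" for n
  proof -
    have "norm (gr (Y n)) \<le> 1"
      using c X by (simp add: Y_def gr_scaleR field_simps)
    then have "(norm (Y n))\<^sup>2 + (norm (A (Y n)))\<^sup>2 \<le> 1"
      by (simp add: power2_norm_gr[symmetric] power_le_one)
    then show ?thesis
      using scaleR_mem[OF X] closure_subset by (fastforce simp: Y_def)
  qed
  then obtain l y where l: "strict_mono l" and Yl: "(Y \<circ> l) \<longlonglongrightarrow> y"
    using compact_imp_seq_compact[OF compact_unit_ball] unfolding seq_compact_def by blast
  have "(\<lambda>k. X (l k)) \<longlonglongrightarrow> scaleR c y"
    using tendsto_scaleR[OF tendsto_const Yl, of c] c(1) by (simp add: Y_def o_def)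
  moreover have "Cauchy (\<lambda>k. gr (T (X (l k))))"
    using Cauchy_subseq_Cauchy[OF TX l] by (simp add: o_def)
  ultimately have "scaleR c y \<in> V \<and> (\<lambda>k. gr (X (l k))) \<longlonglongrightarrow> gr (scaleR c y)"
    using graph_convergent[of "\<lambda>k. X (l k)" B] X bounded by blast
  then show ?thesis
    using that[OF l] by blast
qed

lemma subseq_tendsto_kernel:
  assumes W: "\<And>k. W k \<in> V" "\<And>k. norm (gr (W k)) \<le> B" and TW: "(\<lambda>k. gr (T (W k))) \<longlonglongrightarrow> 0"
  obtains l v where "strict_mono l" and "v \<in> V" and "T v = 0" and "(\<lambda>k. gr (W (l k))) \<longlonglongrightarrow> gr v"
proof -
  obtain l v where l: "strict_mono l" and v: "v \<in> V" and lim: "(\<lambda>k. gr (W (l k))) \<longlonglongrightarrow> gr v"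
    using convergent_subseq[of W B] W LIMSEQ_imp_Cauchy[OF TW] by auto
  have "(\<lambda>k. gr (T (W (l k)))) \<longlonglongrightarrow> gr (T v)"
    using W(1) v lim by (rule T_continuous)
  moreover have "(\<lambda>k. gr (T (W (l k)))) \<longlonglongrightarrow> 0"
    using LIMSEQ_subseq_LIMSEQ[OF TW l] by (simp add: o_def)
  ultimately have "gr (T v) = 0"
    by (rule LIMSEQ_unique)
  then have "T v = 0"
    by (simp add: gr_def zero_prod_def)
  then show ?thesis
    using that l v lim by blast
qed

lemma near_minimal_preimages_bounded:
  assumes u: "\<And>n. u n \<in> V" and Tu: "Bseq (\<lambda>n. gr (T (u n)))"
    and near_min: "\<And>n w. w \<in> V \<Longrightarrow> T w = T (u n) \<Longrightarrow> norm (gr (u n)) \<le> norm (gr w) + 1"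
  shows "\<exists>B. \<forall>n. norm (gr (u n)) \<le> B"
proof (rule ccontr)
  assume "\<nexists>B. \<forall>n. norm (gr (u n)) \<le> B"
  then have "\<forall>k. \<exists>n. real (Suc k) < norm (gr (u n))"
    by (meson not_le)
  then obtain n where n: "\<And>k. real (Suc k) < norm (gr (u (n k)))"
    by metis
  define R where "R k = norm (gr (u (n k)))" for k
  have R_pos: "R k > 0" for k
    using n[of k] of_nat_0_less_iff[of "Suc k"] unfolding R_def by linarith
  have inv_R: "(\<lambda>k. inverse (R k)) \<longlonglongrightarrow> 0"
  proof (rule Lim_null_comparison[OF always_eventually])
    show "\<forall>k. norm (inverse (R k)) \<le> inverse (real (Suc k))"
      using n R_pos by (simp add: R_def less_imp_le less_imp_inverse_less)
    show "(\<lambda>k. inverse (real (Suc k))) \<longlonglongrightarrow> 0"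
      by (rule LIMSEQ_inverse_real_of_nat)
  qed
  define W where "W k = scaleR (inverse (R k)) (u (n k))" for k
  have W: "W k \<in> V" "norm (gr (W k)) = 1" for k
    using u R_pos[of k] by (simp_all add: W_def scaleR_mem gr_scaleR R_def)
  obtain Bs where Bs: "\<And>n. norm (gr (T (u n))) \<le> Bs"
    using Tu by (auto simp: Bseq_def)
  have TW: "(\<lambda>k. gr (T (W k))) \<longlonglongrightarrow> 0"
  proof (rule Lim_null_comparison[OF always_eventually])
    show "\<forall>k. norm (gr (T (W k))) \<le> Bs * inverse (R k)"
    proof
      fix k
      have "norm (gr (T (W k))) = inverse (R k) * norm (gr (T (u (n k))))"
        using u R_pos[of k] by (simp add: W_def T_scaleR gr_scaleR T_mem)
      also have "\<dots> \<le> inverse (R k) * Bs"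
        using Bs R_pos[of k] by (simp add: mult_left_mono)
      finally show "norm (gr (T (W k))) \<le> Bs * inverse (R k)"
        by (simp add: mult.commute)
    qed
    show "(\<lambda>k. Bs * inverse (R k)) \<longlonglongrightarrow> 0"
      by (rule tendsto_mult_right_zero[OF inv_R])
  qed
  obtain l v where l: "strict_mono l" and v: "v \<in> V" "T v = 0"
    and lim: "(\<lambda>k. gr (W (l k))) \<longlonglongrightarrow> gr v"
    using subseq_tendsto_kernel[of W 1] W TW by auto
  \<comment> \<open>Subtracting \<open>R k \<cdot> v\<close> gives another preimage of \<open>T (u (n k))\<close>, which by near-minimality is not much shorter.\<close>
  have key: "1 \<le> norm (gr (W k) - gr v) + inverse (R k)" for k
  proof -
    define w where "w = u (n k) - scaleR (R k) v"
    have w: "w \<in> V" "T w = T (u (n k))"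
      using u v by (simp_all add: w_def diff_mem scaleR_mem T_diff T_scaleR)
    have "gr w = scaleR (R k) (gr (W k) - gr v)"
      using u v R_pos[of k]
      by (simp add: w_def W_def gr_diff gr_scaleR scaleR_mem scaleR_diff_right)
    then have "R k \<le> R k * norm (gr (W k) - gr v) + 1"
      using near_min[OF w] R_pos[of k] by (simp add: R_def)
    then show ?thesis
      using R_pos[of k] by (simp add: field_simps)
  qed
  have "(\<lambda>k. norm (gr (W (l k)) - gr v) + inverse (R (l k))) \<longlonglongrightarrow> 0 + 0"
    using tendsto_norm_zero[OF LIM_zero[OF lim]] LIMSEQ_subseq_LIMSEQ[OF inv_R l]
    by (intro tendsto_add) (simp_all add: o_def)
  then have "1 \<le> (0::real) + 0"
    by (rule LIMSEQ_le_const) (use key in blast)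
  then show False
    by simp
qed

lemma range_closed:
  assumes s: "\<And>n. s n \<in> T ` V" and lim: "(\<lambda>n. gr (s n)) \<longlonglongrightarrow> gr y"
  shows "y \<in> T ` V"
proof -
  have "\<exists>v\<in>{v \<in> V. T v = s n}. \<forall>w\<in>{v \<in> V. T v = s n}. norm (gr v) \<le> norm (gr w) + 1" for n
    using s[of n] by (intro exists_near_minimizer) auto
  then obtain u where u: "\<And>n. u n \<in> V" "\<And>n. T (u n) = s n"
    and near_min: "\<And>n w. w \<in> V \<Longrightarrow> T w = s n \<Longrightarrow> norm (gr (u n)) \<le> norm (gr w) + 1"
    by (metis (mono_tags, lifting) mem_Collect_eq)
  have "Bseq (\<lambda>n. gr (T (u n)))"
    using convergent_imp_Bseq[OF convergentI[OF lim]] by (simp add: u(2))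
  then have "\<exists>B. \<forall>n. norm (gr (u n)) \<le> B"
    using u near_min by (intro near_minimal_preimages_bounded) auto
  then obtain B where "\<And>n. norm (gr (u n)) \<le> B"
    by blast
  moreover have "Cauchy (\<lambda>n. gr (T (u n)))"
    using LIMSEQ_imp_Cauchy[OF lim] by (simp add: u(2))
  ultimately obtain l x where l: "strict_mono l" and x: "x \<in> V"
    and ulim: "(\<lambda>k. gr (u (l k))) \<longlonglongrightarrow> gr x"
    using convergent_subseq[of u B] u(1) by blast
  have "(\<lambda>k. gr (T (u (l k)))) \<longlonglongrightarrow> gr (T x)"
    using u(1) x ulim by (rule T_continuous)
  moreover have "(\<lambda>k. gr (T (u (l k)))) \<longlonglongrightarrow> gr y"
    using LIMSEQ_subseq_LIMSEQ[OF lim l] by (simp add: o_def u(2))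
  ultimately have "T x = y"
    using LIMSEQ_unique gr_eq_iff by blast
  then show ?thesis
    using x by blast
qed

end

theorem lemma5p5:
  fixes domG :: "'h0::chilbert_space set" and G :: "'h0 \<Rightarrow> 'h1::chilbert_space"
    and domD :: "'h1 set" and D :: "'h1 \<Rightarrow> 'h0"
    and domGo :: "'h0 set" and Go :: "'h0 \<Rightarrow> 'h1"
    and m :: "'h0 \<Rightarrow> 'h0" and a :: "'h1 \<Rightarrow> 'h1" and T :: "'h0 \<Rightarrow> 'h0"
  assumes G_dense: "densely_defined domG G" and G_closed: "closed_op domG G"
    and D_dense: "densely_defined domD D" and D_closed: "closed_op domD D"
    and adjG_sub_D: "adj_dom domG G \<subseteq> domD"
    and adjG_sub_D': "\<forall>y\<in>adj_dom domG G. D y = - adj domG G y"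
    and Go_dom: "domGo = adj_dom domD D"
    and Go_def: "\<forall>u\<in>domGo. Go u = - adj domD D u"
    and m_bdd: "bounded_clinear m"
    and a_bdd: "bounded_clinear a"
    and a_coercive: "\<exists>\<mu>>0. \<forall>x. Re (cinner (a x) x) \<ge> \<mu> * (norm x)\<^sup>2"
    and T_maps: "T ` domGo \<subseteq> domGo"
    and T_bdd: "\<exists>K. \<forall>u\<in>domGo. (norm (T u))\<^sup>2 + (norm (Go (T u)))\<^sup>2 \<le> K * ((norm u)\<^sup>2 + (norm (Go u))\<^sup>2)"
    and T_def: "\<forall>u\<in>domGo. \<forall>v\<in>domGo.
       cinner (T u) v + cinner (Go (T u)) (Go v) = cinner (a (G u)) (G v) + cinner (m u) v"
    and tau_compact: "compact (closure {u \<in> domGo. (norm u)\<^sup>2 + (norm (Go u))\<^sup>2 \<le> 1})"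
  shows "\<forall>s y. (\<forall>n. s n \<in> T ` domGo) \<and> y \<in> domGo \<and> s \<longlonglongrightarrow> y \<and> (\<lambda>n. Go (s n)) \<longlonglongrightarrow> Go y
           \<longrightarrow> y \<in> T ` domGo"
proof -
  have Go_sub_G: "u \<in> domG \<and> G u = Go u" if "u \<in> domGo" for u
    using neg_adj_subset_swap[OF G_dense G_closed D_dense adjG_sub_D] adjG_sub_D' Go_dom Go_def that
    by auto
  have "closure domD = UNIV"
    using D_dense by (simp add: densely_defined_def)
  then have Go_closed: "closed_op domGo Go"
    using closed_op_neg_adj Go_dom Go_def by blast
  interpret compact_form_operator domGo Go a m T
  proof unfold_locales
    show "cinner (T u) v + cinner (Go (T u)) (Go v) = cinner (a (Go u)) (Go v) + cinner (m u) v"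
      if "u \<in> domGo" and "v \<in> domGo" for u v
      using T_def[rule_format, OF that] Go_sub_G[OF that(1)] Go_sub_G[OF that(2)] by simp
  qed (fact Go_closed a_bdd m_bdd a_coercive T_maps T_bdd tau_compact)+
  show ?thesis
  proof (intro allI impI, elim conjE)
    fix s y
    assume s: "\<forall>n. s n \<in> T ` domGo" and "s \<longlonglongrightarrow> y" and "(\<lambda>n. Go (s n)) \<longlonglongrightarrow> Go y"
    then have "(\<lambda>n. gr (s n)) \<longlonglongrightarrow> gr y"
      unfolding gr_def by (intro tendsto_Pair)
    then show "y \<in> T ` domGo"
      by (rule range_closed[OF s[rule_format]])
  qed
qed

end
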